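(* Let $p\ge 2$ and $\varphi\in\mathbb{C}^{p-1}\setminus\Omega$. Then $\dim Z^2_{0}(F_\varphi,F_\varphi)=4p^2-8p+5$.
   Context: Let $p\ge 2$ and $\varphi=(\varphi_1,\dots,\varphi_{p-1})\in\mathbb{C}^{p-1}$. $F_\varphi$ denotes the $2p$-dimensional complex Lie algebra with basis $X_1,\dots,X_{2p}$ whose nonzero brackets (up to antisymmetry) are $[X_1,X_2]=X_1$, $[X_2,X_{2k+1}]=\varphi_kX_{2k+1}$, $[X_2,X_{2k+2}]=-(1+\varphi_k)X_{2k+2}$, $[X_{2k+1},X_{2k+2}]=X_1$ for $1\le k\le p-1$. It is graded by $(F_\varphi)_0=\mathbb{C}X_2$, $(F_\varphi)_1=\operatorname{span}\{X_3,\dots,X_{2p}\}$, $(F_\varphi)_2=\mathbb{C}X_1$. A $2$-cochain $\psi$ is homogeneous of degree $k$ if $\psi((F_\varphi)_i,(F_\varphi)_j)\subset(F_\varphi)_{i+j+k}$; $Z^2_k(F_\varphi,F_\varphi)$ denotes the space of homogeneous degree-$k$ $2$-cocycles of the Chevalley–Eilenberg complex with adjoint coefficients. $\Omega=\Omega_1\cup\Omega_2\subset\mathbb{C}^{p-1}$, where $\Omega_1$ is the union of the hyperplanes $\{1+\varphi_i+\varphi_j=0\}$, $\{2+\varphi_i+\varphi_j=0\}$ ($1\le i,j\le p-1$), $\{\varphi_i-\varphi_j=0\}$ ($i\ne j$), $\{\varphi_i=0\}$, $\{\varphi_i+1=0\}$, $\{2\varphi_i+1=0\}$, and $\Omega_2$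 is the union of $\{1+\varphi_i-\varphi_j=0\}$, $\{\varphi_i+\varphi_j=0\}$, $\{2+\varphi_i=0\}$, $\{1-\varphi_i=0\}$, $\{1+2\varphi_i-\varphi_j=0\}$, $\{1+2\varphi_i+\varphi_j=0\}$, $\{2\varphi_i-\varphi_j=0\}$, $\{2+2\varphi_i+\varphi_j=0\}$ ($1\le i,j\le p-1$). *)

theory Defs
  imports Complex_Main "HOL-Library.Function_Algebras"
begin

text \<open>Basis X_1,...,X_{2p} indexed by the naturals 1..2p.  phi is a function
  nat => complex whose values at 1..p-1 are the components phi_1..phi_{p-1}.\<close>

text \<open>Structure constants: Fbr phi i j k = coefficient of X_k in [X_i, X_j] in F_phi.\<close>
definition Fbr :: "(nat \<Rightarrow> complex) \<Rightarrow> nat \<Rightarrow> nat \<Rightarrow> nat \<Rightarrow> complex" where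
  "Fbr phi i j k =
    (if i = 1 \<and> j = 2 \<and> k = 1 then 1
     else if i = 2 \<and> j = 1 \<and> k = 1 then -1
     else if i = 2 \<and> j \<ge> 3 \<and> odd j \<and> k = j then phi ((j - 1) div 2)
     else if j = 2 \<and> i \<ge> 3 \<and> odd i \<and> k = i then - phi ((i - 1) div 2)
     else if i = 2 \<and> j \<ge> 4 \<and> even j \<and> k = j then - (1 + phi ((j - 2) div 2))
     else if j = 2 \<and> i \<ge> 4 \<and> even i \<and> k = i then 1 + phi ((i - 2) div 2)
     else if i \<ge> 3 \<and> odd i \<and> j = i + 1 \<and> k = 1 then 1
     else if j \<ge> 3 \<and> odd j \<and> i = j + 1 \<and> k = 1 then -1
     else 0)"

definition Fdeg :: "nat \<Rightarrow> int" where
  "Fdeg i = (if i = 1 then 2 else if i = 2 then 0 else 1)"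

text \<open>A 2-cochain psi in C^2(F_phi,F_phi) is represented by its coefficient tensor:
  c i j k = coefficient of X_k in psi(X_i, X_j); zero outside the index range 1..2p,
  and antisymmetric in (i,j).\<close>
definition cochain2 :: "nat \<Rightarrow> (nat \<Rightarrow> nat \<Rightarrow> nat \<Rightarrow> complex) \<Rightarrow> bool" where
  "cochain2 p c \<longleftrightarrow>
     (\<forall>i j k. c i j k \<noteq> 0 \<longrightarrow> i \<in> {1..2*p} \<and> j \<in> {1..2*p} \<and> k \<in> {1..2*p}) \<and>
     (\<forall>i j k. c i j k = - c j i k)"

text \<open>Homogeneous of degree d: psi((F)_a,(F)_b) \<subseteq> (F)_{a+b+d}
  (where (F)_m = 0 for m outside {0,1,2}).\<close>
definition homogeneous2 :: "int \<Rightarrow> (nat \<Rightarrow> nat \<Rightarrow> nat \<Rightarrow> complex) \<Rightarrow> bool" where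
  "homogeneous2 d c \<longleftrightarrow> (\<forall>i j k. c i j k \<noteq> 0 \<longrightarrow> Fdeg k = Fdeg i + Fdeg j + d)"

text \<open>Chevalley-Eilenberg differential with adjoint coefficients, on basis vectors:
  d psi(x,y,z) = [x,psi(y,z)] - [y,psi(x,z)] + [z,psi(x,y)]
                 - psi([x,y],z) + psi([x,z],y) - psi([y,z],x);
  here the coefficient of X_m in d psi(X_a,X_b,X_e).\<close>
definition dCE2 :: "nat \<Rightarrow> (nat \<Rightarrow> complex) \<Rightarrow> (nat \<Rightarrow> nat \<Rightarrow> nat \<Rightarrow> complex)
                    \<Rightarrow> nat \<Rightarrow> nat \<Rightarrow> nat \<Rightarrow> nat \<Rightarrow> complex" where
  "dCE2 p phi c a b e m =
     (\<Sum>l\<in>{1..2*p}.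
         Fbr phi a l m * c b e l - Fbr phi b l m * c a e l + Fbr phi e l m * c a b l
       - Fbr phi a b l * c l e m + Fbr phi a e l * c l b m - Fbr phi b e l * c l a m)"

definition cocycle2 :: "nat \<Rightarrow> (nat \<Rightarrow> complex) \<Rightarrow> (nat \<Rightarrow> nat \<Rightarrow> nat \<Rightarrow> complex) \<Rightarrow> bool" where
  "cocycle2 p phi c \<longleftrightarrow> cochain2 p c \<and>
     (\<forall>a\<in>{1..2*p}. \<forall>b\<in>{1..2*p}. \<forall>e\<in>{1..2*p}. \<forall>m\<in>{1..2*p}. dCE2 p phi c a b e m = 0)"

definition Z2 :: "nat \<Rightarrow> (nat \<Rightarrow> complex) \<Rightarrow> int \<Rightarrow> (nat \<Rightarrow> nat \<Rightarrow> nat \<Rightarrow> complex) set" where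
  "Z2 p phi d = {c. cocycle2 p phi c \<and> homogeneous2 d c}"

definition tscale :: "complex \<Rightarrow> (nat \<Rightarrow> nat \<Rightarrow> nat \<Rightarrow> complex) \<Rightarrow> (nat \<Rightarrow> nat \<Rightarrow> nat \<Rightarrow> complex)" where
  "tscale a c = (\<lambda>i j k. a * c i j k)"

abbreviation cdim :: "(nat \<Rightarrow> nat \<Rightarrow> nat \<Rightarrow> complex) set \<Rightarrow> nat" where
  "cdim \<equiv> vector_space.dim tscale"

definition Omega1 :: "nat \<Rightarrow> (nat \<Rightarrow> complex) \<Rightarrow> bool" where
  "Omega1 p phi \<longleftrightarrow>
    (\<exists>i\<in>{1..p-1}. \<exists>j\<in>{1..p-1}. 1 + phi i + phi j = 0 \<or> 2 + phi i + phi j = 0) \<or>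
    (\<exists>i\<in>{1..p-1}. \<exists>j\<in>{1..p-1}. i \<noteq> j \<and> phi i - phi j = 0) \<or>
    (\<exists>i\<in>{1..p-1}. phi i = 0 \<or> phi i + 1 = 0 \<or> 2 * phi i + 1 = 0)"

definition Omega2 :: "nat \<Rightarrow> (nat \<Rightarrow> complex) \<Rightarrow> bool" where
  "Omega2 p phi \<longleftrightarrow>
    (\<exists>i\<in>{1..p-1}. \<exists>j\<in>{1..p-1}.
        1 + phi i - phi j = 0 \<or> phi i + phi j = 0 \<or> 2 + phi i = 0 \<or> 1 - phi i = 0 \<or>
        1 + 2 * phi i - phi j = 0 \<or> 1 + 2 * phi i + phi j = 0 \<or>
        2 * phi i - phi j = 0 \<or> 2 + 2 * phi i + phi j = 0)"

definition in_Omega :: "nat \<Rightarrow> (nat \<Rightarrow> complex) \<Rightarrow> bool" where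
  "in_Omega p phi \<longleftrightarrow> Omega1 p phi \<or> Omega2 p phi"

end

theory Submission
  imports Defs
begin

text \<open>
  A degree-0 cochain psi has three kinds of coefficients: psi(X_2, X_a) in span{X_3, ..., X_2p},
  psi(X_2, X_1) in C X_1 and psi(X_a, X_b) in C X_1 for a, b >= 3. For degree reasons the only
  cocycle conditions are the X_1-coefficients of d psi(X_2, X_u, X_v) with u, v >= 3 distinct.
  With lambda_u the eigenvalue of ad X_2 on X_u, such a condition expresses
  (1 + lambda_u + lambda_v) psi(X_u, X_v) through coefficients of psi(X_2, -). Off Omega_1 the
  factor 1 + lambda_u + lambda_v vanishes exactly on the pairs {2k+1, 2k+2}; for these the
  condition becomes the relation psi(X_2, X_2k+1)_2k+1 + psi(X_2, X_2k+2)_2k+2 = psi(X_2, X_1)_1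
  and leaves psi(X_2k+1, X_2k+2) free, while every other psi(X_u, X_v) is determined.
  So a cocycle is freely and uniquely given by the entries psi(X_2, X_a)_b off the even
  diagonal, by psi(X_2, X_1)_1 and by the p - 1 values psi(X_2k+1, X_2k+2)_1: that is
  (2p-2)^2 - (p-1) + 1 + (p-1) = 4p^2 - 8p + 5 coordinates.
\<close>

interpretation V: vector_space tscale
  by unfold_locales (simp_all add: tscale_def fun_eq_iff algebra_simps)

definition entry :: "(nat \<Rightarrow> nat \<Rightarrow> nat \<Rightarrow> complex) \<Rightarrow> nat \<times> nat \<times> nat \<Rightarrow> complex" where
  "entry c = (\<lambda>(i, j, k). c i j k)"

lemma entry_diff: "entry (c - d) t = entry c t - entry d t"
  by (simp add: entry_def split: prod.splits)

lemma entry_tscale: "entry (tscale a c) t = a * entry c t"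
  by (simp add: entry_def tscale_def split: prod.splits)

lemma entry_sum: "entry (\<Sum>x\<in>A. f x) t = (\<Sum>x\<in>A. entry (f x) t)"
  by (induction A rule: infinite_finite_induct) (auto simp: entry_def split: prod.splits)

lemma cdim_eq_card_coordinates:
  fixes Z :: "(nat \<Rightarrow> nat \<Rightarrow> nat \<Rightarrow> complex) set"
  assumes Z: "V.subspace Z" and F: "finite F"
    and E_in: "\<And>t. t \<in> F \<Longrightarrow> E t \<in> Z"
    and E_entry: "\<And>s t. s \<in> F \<Longrightarrow> t \<in> F \<Longrightarrow> entry (E t) s = (if s = t then 1 else 0)"
    and unique: "\<And>z. z \<in> Z \<Longrightarrow> (\<And>t. t \<in> F \<Longrightarrow> entry z t = 0) \<Longrightarrow> z = 0"
  shows "cdim Z = card F"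
proof -
  have inj: "inj_on E F"
    by (rule inj_onI) (metis E_entry zero_neq_one)
  have coeff: "(\<Sum>t\<in>F. f t * entry (E t) s) = f s" if "s \<in> F" for f s
    using F that by (simp add: E_entry if_distrib[of "(*) _"] cong: if_cong)
  have indep: "V.independent (E ` F)"
  proof (rule V.independent_if_scalars_zero)
    fix f x assume sum0: "(\<Sum>y\<in>E ` F. tscale (f y) y) = 0" and "x \<in> E ` F"
    then obtain s where s: "s \<in> F" "x = E s" by auto
    have "0 = entry (\<Sum>y\<in>E ` F. tscale (f y) y) s"
      by (simp add: sum0 entry_def split: prod.splits)
    also have "\<dots> = (\<Sum>t\<in>F. f (E t) * entry (E t) s)"
      by (simp add: entry_sum entry_tscale sum.reindex[OF inj])
    also have "\<dots> = f x" using coeff s by simp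
    finally show "f x = 0" ..
  qed (use F in simp)
  have span: "Z \<subseteq> V.span (E ` F)"
  proof
    fix z assume z: "z \<in> Z"
    define w where "w = (\<Sum>t\<in>F. tscale (entry z t) (E t))"
    have "z - w \<in> Z"
      unfolding w_def
      by (intro V.subspace_diff[OF Z z] V.subspace_sum[OF Z] V.subspace_scale[OF Z] E_in)
    moreover have "entry (z - w) s = 0" if "s \<in> F" for s
      using coeff[OF that] by (simp add: w_def entry_diff entry_sum entry_tscale)
    ultimately have "z = w" using unique by fastforce
    moreover have "w \<in> V.span (E ` F)"
      unfolding w_def by (intro V.span_sum V.span_scale V.span_base) auto
    ultimately show "z \<in> V.span (E ` F)" by simp
  qed
  show ?thesis
    using V.dim_unique[OF _ span indep] E_in card_image[OF inj] by blast
qed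

lemma Fbr_antisym: "Fbr phi i j k = - Fbr phi j i k"
  unfolding Fbr_def by auto

lemma Fbr_degree: "Fbr phi i j k \<noteq> 0 \<Longrightarrow> Fdeg k = Fdeg i + Fdeg j"
  unfolding Fbr_def Fdeg_def by (auto split: if_splits)

lemma dCE2_add: "dCE2 p phi (c + d) a b e m = dCE2 p phi c a b e m + dCE2 p phi d a b e m"
  unfolding dCE2_def sum.distrib[symmetric] by (rule sum.cong) (simp_all add: algebra_simps)

lemma dCE2_tscale: "dCE2 p phi (tscale x c) a b e m = x * dCE2 p phi c a b e m"
  unfolding dCE2_def sum_distrib_left tscale_def by (rule sum.cong) (simp_all add: algebra_simps)

lemma dCE2_zero: "dCE2 p phi 0 a b e m = 0"
  unfolding dCE2_def by simp

lemma cochain2_add: "cochain2 p c \<Longrightarrow> cochain2 p d \<Longrightarrow> cochain2 p (c + d)"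
  unfolding cochain2_def plus_fun_apply by (metis add.right_neutral minus_add_distrib)

lemma cochain2_tscale: "cochain2 p c \<Longrightarrow> cochain2 p (tscale a c)"
  unfolding cochain2_def tscale_def by (metis mult_minus_right mult_zero_right)

lemma homogeneous2_add: "homogeneous2 d c \<Longrightarrow> homogeneous2 d c' \<Longrightarrow> homogeneous2 d (c + c')"
  unfolding homogeneous2_def plus_fun_apply by (metis add.right_neutral)

lemma homogeneous2_tscale: "homogeneous2 d c \<Longrightarrow> homogeneous2 d (tscale a c)"
  unfolding homogeneous2_def tscale_def by (metis mult_zero_right)

lemma Z2_subspace: "V.subspace (Z2 p phi d)"
proof (rule V.subspaceI)
  show "0 \<in> Z2 p phi d"
    unfolding Z2_def cocycle2_def cochain2_def homogeneous2_def by (simp add: dCE2_zero)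
  show "x + y \<in> Z2 p phi d" if "x \<in> Z2 p phi d" "y \<in> Z2 p phi d" for x y
    using that unfolding Z2_def cocycle2_def by (simp add: cochain2_add homogeneous2_add dCE2_add)
  show "tscale a x \<in> Z2 p phi d" if "x \<in> Z2 p phi d" for a x
    using that unfolding Z2_def cocycle2_def
    by (simp add: cochain2_tscale homogeneous2_tscale dCE2_tscale)
qed

lemma dCE2_swap12:
  assumes "\<And>i j k. c i j k = - c j i k"
  shows "dCE2 p phi c b a e m = - dCE2 p phi c a b e m"
  unfolding dCE2_def sum_negf[symmetric]
  by (rule sum.cong) (use assms[of b a] Fbr_antisym[of phi b a] in \<open>simp_all add: algebra_simps\<close>)

lemma dCE2_swap23:
  assumes "\<And>i j k. c i j k = - c j i k"
  shows "dCE2 p phi c a e b m = - dCE2 p phi c a b e m"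
  unfolding dCE2_def sum_negf[symmetric]
  by (rule sum.cong) (use assms[of e b] Fbr_antisym[of phi e b] in \<open>simp_all add: algebra_simps\<close>)

lemma dCE2_degree:
  assumes "homogeneous2 d c" and "dCE2 p phi c a b e m \<noteq> 0"
  shows "Fdeg m = Fdeg a + Fdeg b + Fdeg e + d"
proof (rule ccontr)
  assume wrong: "Fdeg m \<noteq> Fdeg a + Fdeg b + Fdeg e + d"
  have c_deg: "Fdeg k = Fdeg i + Fdeg j + d" if "c i j k \<noteq> 0" for i j k
    using assms(1) that unfolding homogeneous2_def by blast
  have "dCE2 p phi c a b e m = 0"
    unfolding dCE2_def
  proof (rule sum.neutral, rule ballI)
    fix l
    have br_l: "Fbr phi x y l * c l z m = 0"
      if "Fdeg x + Fdeg y + Fdeg z = Fdeg a + Fdeg b + Fdeg e" for x y z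
      using Fbr_degree[of phi x y l] c_deg[of l z m] that wrong by (cases "Fbr phi x y l = 0") auto
    have br_m: "Fbr phi x l m * c y z l = 0"
      if "Fdeg x + Fdeg y + Fdeg z = Fdeg a + Fdeg b + Fdeg e" for x y z
      using Fbr_degree[of phi x l m] c_deg[of y z l] that wrong by (cases "Fbr phi x l m = 0") auto
    have terms_vanish:
      "Fbr phi a l m * c b e l = 0" "Fbr phi b l m * c a e l = 0" "Fbr phi e l m * c a b l = 0"
      "Fbr phi a b l * c l e m = 0" "Fbr phi a e l * c l b m = 0" "Fbr phi b e l * c l a m = 0"
      using br_m[of a b e] br_m[of b a e] br_m[of e a b]
        br_l[of a b e] br_l[of a e b] br_l[of b e a]
      by (simp_all add: ac_simps)
    show "Fbr phi a l m * c b e l - Fbr phi b l m * c a e l + Fbr phi e l m * c a b l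
        - Fbr phi a b l * c l e m + Fbr phi a e l * c l b m - Fbr phi b e l * c l a m = 0"
      unfolding terms_vanish by simp
  qed
  with assms(2) show False ..
qed

definition partner :: "nat \<Rightarrow> nat" where
  "partner u = (if odd u then u + 1 else u - 1)"

definition pair_sign :: "nat \<Rightarrow> complex" where
  "pair_sign u = (if odd u then 1 else -1)"

definition eigval :: "(nat \<Rightarrow> complex) \<Rightarrow> nat \<Rightarrow> complex" where
  "eigval phi u = (if odd u then phi ((u - 1) div 2) else - (1 + phi ((u - 2) div 2)))"

lemma Fbr_2_l_1: "Fbr phi 2 l 1 = (if l = 1 then -1 else 0)"
  unfolding Fbr_def by auto

lemma Fbr_u_l_1:
  assumes "3 \<le> u"
  shows "Fbr phi u l 1 = (if l = partner u then pair_sign u else 0)"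
proof -
  have "even u \<Longrightarrow> 4 \<le> u" using assms by presburger
  then show ?thesis using assms unfolding Fbr_def partner_def pair_sign_def by auto
qed

lemma Fbr_2_u_l: "3 \<le> u \<Longrightarrow> Fbr phi 2 u l = (if l = u then eigval phi u else 0)"
  unfolding Fbr_def eigval_def by auto

lemma Fbr_u_v_l:
  "3 \<le> u \<Longrightarrow> 3 \<le> v \<Longrightarrow> Fbr phi u v l = (if v = partner u \<and> l = 1 then pair_sign u else 0)"
  unfolding Fbr_def partner_def pair_sign_def by auto

lemma deg1_index_cases:
  fixes u p :: nat
  assumes "u \<in> {3..2*p}"
  obtains i where "i \<in> {1..p-1}" "u = 2*i + 1" | i where "i \<in> {1..p-1}" "u = 2*i + 2"
proof (cases "odd u")
  case True
  then obtain i where "u = 2*i + 1" by (rule oddE)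
  then show ?thesis using that(1)[of i] assms by auto
next
  case False
  then obtain j where "u = 2*j" by blast
  then show ?thesis using that(2)[of "j - 1"] assms by auto
qed

lemma partner_in: "u \<in> {3..2*p} \<Longrightarrow> partner u \<in> {3..2*p}"
  by (erule deg1_index_cases) (auto simp: partner_def)

lemma partner_partner: "u \<in> {3..2*p} \<Longrightarrow> partner (partner u) = u"
  by (erule deg1_index_cases) (auto simp: partner_def)

lemma pair_sign_partner: "u \<in> {3..2*p} \<Longrightarrow> pair_sign (partner u) = - pair_sign u"
  by (erule deg1_index_cases) (auto simp: partner_def pair_sign_def)

lemma pair_sign_neq_0: "pair_sign u \<noteq> 0"
  unfolding pair_sign_def by simp

lemma eigval_partner: "u \<in> {3..2*p} \<Longrightarrow> eigval phi u + eigval phi (partner u) = -1"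
  by (erule deg1_index_cases) (auto simp: partner_def eigval_def)

lemma sum_delta_mult:
  fixes a :: "'a::semiring_0"
  shows "finite A \<Longrightarrow> x \<in> A \<Longrightarrow> (\<Sum>l\<in>A. (if l = x then a else 0) * f l) = a * f x"
  by (simp add: if_distrib[of "\<lambda>y. y * _"] cong: if_cong)

lemma dCE2_2_u_v_1:
  assumes antisym: "\<And>i j k. c i j k = - c j i k" and u: "u \<in> {3..2*p}" and v: "v \<in> {3..2*p}"
  shows "dCE2 p phi c 2 u v 1 = - (1 + eigval phi u + eigval phi v) * c u v 1
     - pair_sign u * c 2 v (partner u) + pair_sign v * c 2 u (partner v)
     + (if v = partner u then pair_sign u * c 2 1 1 else 0)"
proof -
  let ?A = "{1..2*p}"
  have in_A: "1 \<in> ?A" "partner u \<in> ?A" "partner v \<in> ?A" "u \<in> ?A" "v \<in> ?A"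
    using u v partner_in[OF u] partner_in[OF v] by auto
  have u3: "u \<ge> 3" and v3: "v \<ge> 3" using u v by auto
  have "(\<Sum>l\<in>?A. Fbr phi 2 l 1 * c u v l) = - c u v 1"
    unfolding Fbr_2_l_1 using sum_delta_mult[of ?A 1 "-1" "c u v"] in_A by simp
  moreover have "(\<Sum>l\<in>?A. Fbr phi u l 1 * c 2 v l) = pair_sign u * c 2 v (partner u)"
    unfolding Fbr_u_l_1[OF u3] using sum_delta_mult[of ?A "partner u"] in_A by simp
  moreover have "(\<Sum>l\<in>?A. Fbr phi v l 1 * c 2 u l) = pair_sign v * c 2 u (partner v)"
    unfolding Fbr_u_l_1[OF v3] using sum_delta_mult[of ?A "partner v"] in_A by simp
  moreover have "(\<Sum>l\<in>?A. Fbr phi 2 u l * c l v 1) = eigval phi u * c u v 1"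
    unfolding Fbr_2_u_l[OF u3] using sum_delta_mult[of ?A u _ "\<lambda>l. c l v 1"] in_A by simp
  moreover have "(\<Sum>l\<in>?A. Fbr phi 2 v l * c l u 1) = eigval phi v * c v u 1"
    unfolding Fbr_2_u_l[OF v3] using sum_delta_mult[of ?A v _ "\<lambda>l. c l u 1"] in_A by simp
  moreover have "(\<Sum>l\<in>?A. Fbr phi u v l * c l 2 1)
      = (if v = partner u then pair_sign u * c 1 2 1 else 0)"
    unfolding Fbr_u_v_l[OF u3 v3] using sum_delta_mult[of ?A 1 _ "\<lambda>l. c l 2 1"] in_A by simp
  ultimately have "dCE2 p phi c 2 u v 1 = - c u v 1 - pair_sign u * c 2 v (partner u)
      + pair_sign v * c 2 u (partner v) - eigval phi u * c u v 1 + eigval phi v * c v u 1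
      - (if v = partner u then pair_sign u * c 1 2 1 else 0)"
    unfolding dCE2_def sum.distrib sum_subtractf by (simp only:)
  then show ?thesis
    using antisym[of v u 1] antisym[of 1 2 1]
    by (cases "v = partner u") (simp_all add: algebra_simps)
qed

lemma dCE2_2_u_partner_1:
  assumes antisym: "\<And>i j k. c i j k = - c j i k" and u: "u \<in> {3..2*p}"
  shows "dCE2 p phi c 2 u (partner u) 1
    = pair_sign u * (c 2 1 1 - c 2 u u - c 2 (partner u) (partner u))"
  using dCE2_2_u_v_1[OF antisym u partner_in[OF u]]
  by (simp add: eigval_partner[OF u] partner_partner[OF u] pair_sign_partner[OF u] algebra_simps)

lemma dCE2_eq_0_if_2_u_v_1:
  assumes antisym: "\<And>i j k. c i j k = - c j i k" and hom: "homogeneous2 0 c"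
    and eqs: "\<And>u v. u \<in> {3..2*p} \<Longrightarrow> v \<in> {3..2*p} \<Longrightarrow> u \<noteq> v \<Longrightarrow> dCE2 p phi c 2 u v 1 = 0"
    and "a \<in> {1..2*p}" "b \<in> {1..2*p}" "e \<in> {1..2*p}" "m \<in> {1..2*p}"
  shows "dCE2 p phi c a b e m = 0"
proof (rule ccontr)
  assume nz: "dCE2 p phi c a b e m \<noteq> 0"
  have swap12: "\<And>a b e m. dCE2 p phi c b a e m = - dCE2 p phi c a b e m"
    using dCE2_swap12[OF antisym] .
  have swap23: "\<And>a b e m. dCE2 p phi c a e b m = - dCE2 p phi c a b e m"
    using dCE2_swap23[OF antisym] .
  have "a \<noteq> b" using nz swap12[of a a e m] by auto
  moreover have "b \<noteq> e" using nz swap23[of a b b m] by auto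
  moreover have "a \<noteq> e" using nz swap12[of a b a m] swap23[of b a a m] by auto
  moreover have "Fdeg m = Fdeg a + Fdeg b + Fdeg e" using dCE2_degree[OF hom nz] by simp
  ultimately consider "a = 2" "b \<in> {3..2*p}" "e \<in> {3..2*p}" "m = 1"
    | "b = 2" "a \<in> {3..2*p}" "e \<in> {3..2*p}" "m = 1"
    | "e = 2" "a \<in> {3..2*p}" "b \<in> {3..2*p}" "m = 1"
    using assms(4-7) unfolding Fdeg_def by (auto split: if_splits)
  then show False
  proof cases
    case 1
    then show False using nz eqs[of b e] \<open>b \<noteq> e\<close> by simp
  next
    case 2
    then show False using nz eqs[of a e] \<open>a \<noteq> e\<close> swap12[of 2 a e 1] by simp
  next
    case 3
    then show False
      using nz eqs[of a b] \<open>a \<noteq> b\<close> swap12[of 2 a b 1] swap23[of a 2 b 1] by simp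
  qed
qed

lemma mem_Z2_0_iff:
  "c \<in> Z2 p phi 0 \<longleftrightarrow> cochain2 p c \<and> homogeneous2 0 c \<and>
    (\<forall>u\<in>{3..2*p}. \<forall>v\<in>{3..2*p}. u \<noteq> v \<longrightarrow> dCE2 p phi c 2 u v 1 = 0)"
proof
  assume "c \<in> Z2 p phi 0"
  then show "cochain2 p c \<and> homogeneous2 0 c \<and>
      (\<forall>u\<in>{3..2*p}. \<forall>v\<in>{3..2*p}. u \<noteq> v \<longrightarrow> dCE2 p phi c 2 u v 1 = 0)"
    unfolding Z2_def cocycle2_def by auto
next
  assume "cochain2 p c \<and> homogeneous2 0 c \<and>
      (\<forall>u\<in>{3..2*p}. \<forall>v\<in>{3..2*p}. u \<noteq> v \<longrightarrow> dCE2 p phi c 2 u v 1 = 0)"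
  moreover from this have "\<And>i j k. c i j k = - c j i k" unfolding cochain2_def by blast
  ultimately show "c \<in> Z2 p phi 0"
    unfolding Z2_def cocycle2_def using dCE2_eq_0_if_2_u_v_1 by blast
qed

lemma eigval_sum_neq_0:
  assumes "\<not> Omega1 p phi" and u: "u \<in> {3..2*p}" and v: "v \<in> {3..2*p}"
    and "u \<noteq> v" "v \<noteq> partner u"
  shows "1 + eigval phi u + eigval phi v \<noteq> 0"
proof -
  have sum: "1 + phi i + phi j \<noteq> 0" if "i \<in> {1..p-1}" "j \<in> {1..p-1}" for i j
    using assms(1) that unfolding Omega1_def by blast
  have diff: "phi i \<noteq> phi j" if "i \<in> {1..p-1}" "j \<in> {1..p-1}" "i \<noteq> j" for i j
    using assms(1) that unfolding Omega1_def by force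
  show ?thesis
  proof (rule deg1_index_cases[OF u]; rule deg1_index_cases[OF v])
    fix i j assume "i \<in> {1..p-1}" "u = 2*i + 1" "j \<in> {1..p-1}" "v = 2*j + 1"
    then show ?thesis using sum[of i j] by (simp add: eigval_def add.assoc)
  next
    fix i j assume "i \<in> {1..p-1}" "u = 2*i + 1" "j \<in> {1..p-1}" "v = 2*j + 2"
    then show ?thesis using diff[of i j] assms(4,5) by (auto simp: eigval_def partner_def)
  next
    fix i j assume "i \<in> {1..p-1}" "u = 2*i + 2" "j \<in> {1..p-1}" "v = 2*j + 1"
    then show ?thesis using diff[of j i] assms(4,5) by (auto simp: eigval_def partner_def)
  next
    fix i j assume "i \<in> {1..p-1}" "u = 2*i + 2" "j \<in> {1..p-1}" "v = 2*j + 2"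
    then have "1 + eigval phi u + eigval phi v = - (1 + phi i + phi j)"
      by (simp add: eigval_def algebra_simps)
    with sum[OF \<open>i \<in> _\<close> \<open>j \<in> _\<close>] show ?thesis by (metis neg_equal_0_iff_equal)
  qed
qed

lemma Z2_antisym: "z \<in> Z2 p phi d \<Longrightarrow> z i j k = - z j i k"
  unfolding Z2_def cocycle2_def cochain2_def by blast

lemma Z2_0_pair_relation:
  assumes z: "z \<in> Z2 p phi 0" and u: "u \<in> {3..2*p}"
  shows "z 2 u u + z 2 (partner u) (partner u) = z 2 1 1"
proof -
  have "partner u \<in> {3..2*p}" "partner u \<noteq> u"
    using partner_in[OF u] u unfolding partner_def by auto
  then have "dCE2 p phi z 2 u (partner u) 1 = 0"
    using z u unfolding mem_Z2_0_iff by auto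
  then have "pair_sign u * (z 2 1 1 - z 2 u u - z 2 (partner u) (partner u)) = 0"
    using dCE2_2_u_partner_1[where c = z and phi = phi, OF Z2_antisym[OF z] u] by simp
  then have "z 2 1 1 - z 2 u u - z 2 (partner u) (partner u) = 0"
    using pair_sign_neq_0[of u] by simp
  then show ?thesis by (simp add: algebra_simps)
qed

lemma Z2_0_deg2_entry:
  assumes z: "z \<in> Z2 p phi 0" and u: "u \<in> {3..2*p}" and v: "v \<in> {3..2*p}"
    and "u \<noteq> v" "v \<noteq> partner u"
  shows "(1 + eigval phi u + eigval phi v) * z u v 1
    = pair_sign v * z 2 u (partner v) - pair_sign u * z 2 v (partner u)"
proof -
  have "dCE2 p phi z 2 u v 1 = 0"
    using z u v \<open>u \<noteq> v\<close> unfolding mem_Z2_0_iff by auto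
  then show ?thesis
    using dCE2_2_u_v_1[where c = z and phi = phi, OF Z2_antisym[OF z] u v] \<open>v \<noteq> partner u\<close>
    by (simp add: algebra_simps)
qed

definition deg0_slot :: "nat \<Rightarrow> nat \<Rightarrow> nat \<Rightarrow> nat \<Rightarrow> bool" where
  "deg0_slot p i j k \<longleftrightarrow>
     (i = 2 \<and> j \<in> {3..2*p} \<and> k \<in> {3..2*p}) \<or> (j = 2 \<and> i \<in> {3..2*p} \<and> k \<in> {3..2*p}) \<or>
     (i = 2 \<and> j = 1 \<and> k = 1) \<or> (i = 1 \<and> j = 2 \<and> k = 1) \<or>
     (i \<in> {3..2*p} \<and> j \<in> {3..2*p} \<and> i \<noteq> j \<and> k = 1)"

lemma deg0_slot_range: "1 \<le> p \<Longrightarrow> deg0_slot p i j k \<Longrightarrow> i \<in> {1..2*p} \<and> j \<in> {1..2*p} \<and> k \<in> {1..2*p}"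
  unfolding deg0_slot_def by auto

lemma deg0_slot_Fdeg: "deg0_slot p i j k \<Longrightarrow> Fdeg k = Fdeg i + Fdeg j"
  unfolding deg0_slot_def Fdeg_def by auto

lemma deg0_slot_if_nonzero:
  assumes "cochain2 p c" "homogeneous2 0 c" "c i j k \<noteq> 0"
  shows "deg0_slot p i j k"
proof -
  have "c i j k = - c j i k" using assms(1) unfolding cochain2_def by blast
  with assms(3) have "i \<noteq> j" by auto
  moreover have "i \<in> {1..2*p} \<and> j \<in> {1..2*p} \<and> k \<in> {1..2*p}"
    using assms(1,3) unfolding cochain2_def by blast
  moreover have "Fdeg k = Fdeg i + Fdeg j" using assms(2,3) unfolding homogeneous2_def by simp
  ultimately show ?thesis unfolding deg0_slot_def Fdeg_def by (auto split: if_splits)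
qed

definition free_coords :: "nat \<Rightarrow> (nat \<times> nat \<times> nat) set" where
  "free_coords p =
     {(2, a, b) | a b. a \<in> {3..2*p} \<and> b \<in> {3..2*p} \<and> \<not> (a = b \<and> even a)} \<union> {(2, 1, 1)} \<union>
     {(u, u + 1, 1) | u. u \<in> {3..2*p} \<and> odd u}"

lemma even_deg1_indices:
  fixes p :: nat
  shows "{a \<in> {3..2*p}. even a} = (\<lambda>i. 2*i + 2) ` {1..p-1}"
proof (rule set_eqI, rule iffI)
  fix a assume "a \<in> {a \<in> {3..2*p}. even a}"
  then have a: "a \<in> {3..2*p}" "even a" by auto
  then obtain j where "a = 2*j" by blast
  with a show "a \<in> (\<lambda>i. 2*i + 2) ` {1..p-1}" by (intro image_eqI[of _ _ "j - 1"]) auto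
qed auto

lemma odd_deg1_indices:
  fixes p :: nat
  shows "{a \<in> {3..2*p}. odd a} = (\<lambda>i. 2*i + 1) ` {1..p-1}"
proof (rule set_eqI, rule iffI)
  fix a assume "a \<in> {a \<in> {3..2*p}. odd a}"
  then have a: "a \<in> {3..2*p}" "odd a" by auto
  then obtain j where "a = 2*j + 1" by (metis oddE)
  with a show "a \<in> (\<lambda>i. 2*i + 1) ` {1..p-1}" by (intro image_eqI[of _ _ j]) auto
qed auto

lemma card_free_coords:
  assumes "p \<ge> 1"
  shows "card (free_coords p) = (2*p - 2) * (2*p - 2) + 1"
proof -
  let ?S = "{3..2*p}"
  let ?D = "(\<lambda>a. (a, a)) ` {a \<in> ?S. even a}"
  let ?A = "(\<lambda>(a, b). (2::nat, a, b)) ` (?S \<times> ?S - ?D)"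
  let ?C = "(\<lambda>u. (u, u + 1, 1::nat)) ` {a \<in> ?S. odd a}"
  have card_D: "card ?D = p - 1"
    unfolding even_deg1_indices by (simp add: card_image inj_on_def)
  have card_A: "card ?A = (2*p - 2) * (2*p - 2) - (p - 1)"
  proof -
    have "card ?A = card (?S \<times> ?S - ?D)" by (rule card_image) (auto simp: inj_on_def)
    also have "\<dots> = card (?S \<times> ?S) - card ?D" by (rule card_Diff_subset) auto
    also have "\<dots> = (2*p - 2) * (2*p - 2) - (p - 1)"
      using card_D by (simp add: card_cartesian_product)
    finally show ?thesis .
  qed
  have card_C: "card ?C = p - 1"
    unfolding odd_deg1_indices by (simp add: card_image inj_on_def)
  have "free_coords p = (?A \<union> {(2, 1, 1)}) \<union> ?C"
    unfolding free_coords_def by auto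
  then have "card (free_coords p) = card (?A \<union> {(2, 1, 1)}) + card ?C"
    by (simp only:) (rule card_Un_disjoint, auto)
  moreover have "card (?A \<union> {(2, 1, 1)}) = card ?A + 1"
  proof -
    have "(2, 1, 1) \<notin> ?A" by auto
    then show ?thesis by simp
  qed
  moreover have "p - 1 \<le> (2*p - 2) * (2*p - 2)" using le_square[of "2*p - 2"] by linarith
  ultimately show ?thesis using card_A card_C by simp
qed

lemma finite_free_coords: "finite (free_coords p)"
proof -
  have "free_coords p \<subseteq> {0..2*p + 2} \<times> {0..2*p + 2} \<times> {0..2*p + 2}"
    unfolding free_coords_def by auto
  then show ?thesis by (rule finite_subset) auto
qed

lemma Z2_0_eq_0_if_free_coords_vanish:
  assumes z: "z \<in> Z2 p phi 0" and "\<not> Omega1 p phi"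
    and free: "\<And>t. t \<in> free_coords p \<Longrightarrow> entry z t = 0"
  shows "z = 0"
proof -
  let ?S = "{3..2*p}"
  have z_2_1_1: "z 2 1 1 = 0"
    and z_2_a_b: "\<And>a b. a \<in> ?S \<Longrightarrow> b \<in> ?S \<Longrightarrow> \<not> (a = b \<and> even a) \<Longrightarrow> z 2 a b = 0"
    and z_u_Suc_u: "\<And>u. u \<in> ?S \<Longrightarrow> odd u \<Longrightarrow> z u (u + 1) 1 = 0"
    using free unfolding free_coords_def entry_def by auto
  have deg1: "z 2 a b = 0" if a: "a \<in> ?S" and b: "b \<in> ?S" for a b
  proof (cases "a = b \<and> even a")
    case True
    then have "partner a \<in> ?S" "odd (partner a)" "partner (partner a) = a"
      using a partner_in[OF a] partner_partner[OF a] unfolding partner_def by auto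
    then show ?thesis
      using Z2_0_pair_relation[OF z, of "partner a"] z_2_1_1
        z_2_a_b[of "partner a" "partner a"] True
      by simp
  qed (use z_2_a_b a b in simp)
  have deg2: "z u v 1 = 0" if u: "u \<in> ?S" and v: "v \<in> ?S" and "u \<noteq> v" for u v
  proof (cases "v = partner u")
    case True
    then show ?thesis
      using z_u_Suc_u[OF u] z_u_Suc_u[OF v] Z2_antisym[OF z, of u v 1] u v unfolding partner_def
      by (cases "odd u") auto
  next
    case False
    then show ?thesis
      using Z2_0_deg2_entry[OF z u v \<open>u \<noteq> v\<close> False]
        eigval_sum_neq_0[OF assms(2) u v \<open>u \<noteq> v\<close> False]
        deg1[OF v partner_in[OF u]] deg1[OF u partner_in[OF v]]
      by simp
  qed
  have "z i j k = 0" for i j k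
  proof (rule ccontr)
    assume nz: "z i j k \<noteq> 0"
    with z have "deg0_slot p i j k" unfolding mem_Z2_0_iff using deg0_slot_if_nonzero by blast
    then show False
      using nz deg1 deg2 z_2_1_1 Z2_antisym[OF z, of i j k] unfolding deg0_slot_def by auto
  qed
  then show "z = 0" by (simp add: fun_eq_iff)
qed

text \<open>The even diagonal entries are not free: the pair relation forces them.\<close>

definition deg1_part :: "(nat \<Rightarrow> nat \<Rightarrow> nat \<Rightarrow> complex) \<Rightarrow> nat \<Rightarrow> nat \<Rightarrow> complex" where
  "deg1_part g a b = (if a = b \<and> even a then g 2 1 1 - g 2 (a - 1) (a - 1) else g 2 a b)"

text \<open>Off the pairs {2k+1, 2k+2} the cocycle condition is solved for psi(X_u, X_v).\<close>

definition deg2_part ::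
    "(nat \<Rightarrow> complex) \<Rightarrow> (nat \<Rightarrow> nat \<Rightarrow> nat \<Rightarrow> complex) \<Rightarrow> nat \<Rightarrow> nat \<Rightarrow> complex" where
  "deg2_part phi g u v =
     (if v = partner u then (if odd u then g u v 1 else - g v u 1)
      else (pair_sign v * deg1_part g u (partner v) - pair_sign u * deg1_part g v (partner u))
           / (1 + eigval phi u + eigval phi v))"

definition cocycle_extension ::
    "nat \<Rightarrow> (nat \<Rightarrow> complex) \<Rightarrow> (nat \<Rightarrow> nat \<Rightarrow> nat \<Rightarrow> complex) \<Rightarrow> nat \<Rightarrow> nat \<Rightarrow> nat \<Rightarrow> complex" where
  "cocycle_extension p phi g i j k =
    (if i = 2 \<and> j \<in> {3..2*p} \<and> k \<in> {3..2*p} then deg1_part g j k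
     else if j = 2 \<and> i \<in> {3..2*p} \<and> k \<in> {3..2*p} then - deg1_part g i k
     else if i = 2 \<and> j = 1 \<and> k = 1 then g 2 1 1
     else if i = 1 \<and> j = 2 \<and> k = 1 then - g 2 1 1
     else if i \<in> {3..2*p} \<and> j \<in> {3..2*p} \<and> i \<noteq> j \<and> k = 1 then deg2_part phi g i j
     else 0)"

lemma deg1_part_partner:
  "u \<in> {3..2*p} \<Longrightarrow> deg1_part g u u + deg1_part g (partner u) (partner u) = g 2 1 1"
  by (erule deg1_index_cases) (auto simp: partner_def deg1_part_def)

lemma deg2_part_antisym:
  assumes u: "u \<in> {3..2*p}" and v: "v \<in> {3..2*p}"
  shows "deg2_part phi g u v = - deg2_part phi g v u"
proof (cases "v = partner u")
  case True
  then have "u = partner v" and "odd u \<longleftrightarrow> \<not> odd v"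
    using partner_partner[OF u] u unfolding partner_def by auto
  with True show ?thesis unfolding deg2_part_def by auto
next
  case False
  then have "u \<noteq> partner v" using partner_partner[OF v] by auto
  with False show ?thesis unfolding deg2_part_def by (simp add: algebra_simps minus_divide_left)
qed

lemma cocycle_extension_antisym:
  "cocycle_extension p phi g i j k = - cocycle_extension p phi g j i k"
  unfolding cocycle_extension_def using deg2_part_antisym[of i p j phi g] by auto

lemma cocycle_extension_slot: "cocycle_extension p phi g i j k \<noteq> 0 \<Longrightarrow> deg0_slot p i j k"
  unfolding cocycle_extension_def deg0_slot_def by (auto split: if_splits)

lemma cocycle_extension_free:
  assumes "t \<in> free_coords p"
  shows "entry (cocycle_extension p phi g) t = entry g t"
  using assms unfolding free_coords_def
proof (elim UnE CollectE exE conjE insertE emptyE)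
  fix u assume "t = (u, u + 1, 1)" "u \<in> {3..2*p}" "odd u"
  moreover from this have "u + 1 = partner u" "u + 1 \<in> {3..2*p}"
    unfolding partner_def by auto presburger
  ultimately show ?thesis unfolding entry_def cocycle_extension_def deg2_part_def by auto
qed (auto simp: entry_def cocycle_extension_def deg1_part_def)

lemma cocycle_extension_eqs:
  assumes "\<not> Omega1 p phi" and u: "u \<in> {3..2*p}" and v: "v \<in> {3..2*p}" and "u \<noteq> v"
  shows "dCE2 p phi (cocycle_extension p phi g) 2 u v 1 = 0"
proof -
  let ?c = "cocycle_extension p phi g"
  have antisym: "\<And>i j k. ?c i j k = - ?c j i k" by (rule cocycle_extension_antisym)
  show ?thesis
  proof (cases "v = partner u")
    case True
    have "?c 2 1 1 - ?c 2 u u - ?c 2 v v = 0"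
      using u v True deg1_part_partner[OF u, of g] unfolding cocycle_extension_def
      by (simp add: diff_diff_eq)
    then show ?thesis
      using dCE2_2_u_partner_1[where c = ?c and phi = phi, OF antisym u] True by simp
  next
    case False
    have "?c u v 1 = deg2_part phi g u v" "?c 2 v (partner u) = deg1_part g v (partner u)"
      "?c 2 u (partner v) = deg1_part g u (partner v)"
      using u v \<open>u \<noteq> v\<close> partner_in[OF u] partner_in[OF v] unfolding cocycle_extension_def by auto
    moreover have "1 + eigval phi u + eigval phi v \<noteq> 0"
      using eigval_sum_neq_0[OF assms(1) u v \<open>u \<noteq> v\<close> False] .
    ultimately show ?thesis
      using dCE2_2_u_v_1[where c = ?c and phi = phi, OF antisym u v] False
      by (simp add: deg2_part_def field_simps)
  qed
qed

lemma cocycle_extension_in_Z2: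
  assumes "\<not> Omega1 p phi" and "1 \<le> p"
  shows "cocycle_extension p phi g \<in> Z2 p phi 0"
proof -
  have "cochain2 p (cocycle_extension p phi g)"
    unfolding cochain2_def
    using cocycle_extension_antisym deg0_slot_range[OF assms(2) cocycle_extension_slot] by blast
  moreover have "homogeneous2 0 (cocycle_extension p phi g)"
    unfolding homogeneous2_def using deg0_slot_Fdeg[OF cocycle_extension_slot] by simp
  ultimately show ?thesis
    unfolding mem_Z2_0_iff using cocycle_extension_eqs[OF assms(1)] by blast
qed

theorem lemma5:
  fixes p :: nat and phi :: "nat \<Rightarrow> complex"
  assumes "p \<ge> 2" and "\<not> in_Omega p phi"
  shows "int (cdim (Z2 p phi 0)) = 4 * int p ^ 2 - 8 * int p + 5"
proof -
  have Omega1: "\<not> Omega1 p phi" using assms(2) unfolding in_Omega_def by simp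
  define E where "E t = cocycle_extension p phi (\<lambda>i j k. if (i, j, k) = t then 1 else 0)" for t
  have "cdim (Z2 p phi 0) = card (free_coords p)"
  proof (rule cdim_eq_card_coordinates[OF Z2_subspace finite_free_coords])
    show "E t \<in> Z2 p phi 0" for t
      unfolding E_def using cocycle_extension_in_Z2[OF Omega1] assms(1) by simp
    show "entry (E t) s = (if s = t then 1 else 0)" if "s \<in> free_coords p" for s t
      unfolding E_def cocycle_extension_free[OF that] by (simp add: entry_def split: prod.splits)
    show "z = 0" if "z \<in> Z2 p phi 0" "\<And>t. t \<in> free_coords p \<Longrightarrow> entry z t = 0" for z
      using Z2_0_eq_0_if_free_coords_vanish[OF that(1) Omega1] that(2) by blast
  qed
  then have "int (cdim (Z2 p phi 0)) = int ((2*p - 2) * (2*p - 2) + 1)"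
    using card_free_coords assms(1) by simp
  also have "\<dots> = (2 * int p - 2) * (2 * int p - 2) + 1" using assms(1) by (simp add: of_nat_diff)
  also have "\<dots> = 4 * int p ^ 2 - 8 * int p + 5" by (simp add: algebra_simps power2_eq_square)
  finally show ?thesis .
qed

end
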